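(* Let $(X,d_X,\mu_X)$ be an mm-space with $X=\operatorname{supp}\mu_X$ and $\operatorname{diam}X<\infty$, and let $x_0\in X$ satisfy $\sup_{x\in X}d_X(x,x_0)=\operatorname{diam}X$. Let $\xi:X\to\mathbb R$, $\xi(x):=d_X(x,x_0)$. Then $\xi_*\mu_X$ is a maximal element of $\mathcal M(X;1)$ with respect to the Lipschitz order. In particular, if $\mathcal M(X;1)$ has a maximum, then this maximum is $\xi_*\mu_X$ (up to mm-isomorphism of $(\mathbb R,|\cdot|,\cdot)$).
   Context: An mm-space is a triple $(X,d_X,\mu_X)$ where $(X,d_X)$ is a complete separable metric space and $\mu_X$ is a Borel probability measure on $X$. The 1-measurement is $\mathcal M(X;1):=\{f_*\mu_X \mid f:X\to\mathbb R \text{ is 1-Lipschitz}\}$. Two mm-spaces $X,Y$ are mm-isomorphic if there is an isometry $f:\operatorname{supp}\mu_X\to\operatorname{supp}\mu_Y$ with $f_*\mu_X=\mu_Y$. For mm-spaces, $Y\prec X$ (Lipschitz order) if there is a 1-Lipschitz map $f:\operatorname{supp}\mu_X\to\operatorname{supp}\mu_Y$ with $f_*\mu_X=\mu_Y$; this is a partial order on mm-isomorphism classes. For Borel probability measures $\mu,\nu$ on $\mathbb R$, $\mu\prec\nu$ means $(\mathbb R,|\cdot|,\mu)\prec(\mathbb R,|\cdot|,\nu)$. An element $\mu\in\mathcal M(X;1)$ is maximal if every $\nu\in\mathcal M(X;1)$ with $\mu\prec\nu$ is mm-isomorphic to $\mu$ (as spaces $(\mathbb R,|\cdot|,\cdot)$);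 it is the maximum if $\nu\prec\mu$ for all $\nu\in\mathcal M(X;1)$. *)

theory Defs
  imports "HOL-Analysis.Analysis" "HOL-Probability.Probability"
begin

text \<open>An mm-space: a complete separable metric space (the type, class polish_space)
  together with a Borel probability measure.\<close>
definition mm_space :: "'a::polish_space measure \<Rightarrow> bool" where
  "mm_space M \<longleftrightarrow> prob_space M \<and> sets M = sets borel"

definition mm_supp :: "'a::metric_space measure \<Rightarrow> 'a set" where
  "mm_supp M = {x. \<forall>U. open U \<longrightarrow> x \<in> U \<longrightarrow> emeasure M U > 0}"

definition measurement1 :: "'a::metric_space measure \<Rightarrow> real measure set" where
  "measurement1 M = {distr M borel f | f. 1-lipschitz_on UNIV f}"

text \<open>Lipschitz order: lip_le N M means N \<prec> M, i.e. there is a 1-Lipschitz map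
  f : supp M \<rightarrow> supp N with f_* M = N.\<close>
definition lip_le :: "'b::metric_space measure \<Rightarrow> 'a::metric_space measure \<Rightarrow> bool" where
  "lip_le N M \<longleftrightarrow> (\<exists>f. 1-lipschitz_on (mm_supp M) f \<and> f ` mm_supp M \<subseteq> mm_supp N
      \<and> f \<in> borel_measurable M \<and> distr M borel f = N)"

definition mm_iso :: "'a::metric_space measure \<Rightarrow> 'b::metric_space measure \<Rightarrow> bool" where
  "mm_iso M N \<longleftrightarrow> (\<exists>f. (\<forall>x\<in>mm_supp M. \<forall>y\<in>mm_supp M. dist (f x) (f y) = dist x y)
      \<and> f ` mm_supp M = mm_supp N \<and> f \<in> borel_measurable M \<and> distr M borel f = N)"

definition maximal_in :: "real measure set \<Rightarrow> real measure \<Rightarrow> bool" where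
  "maximal_in S \<mu> \<longleftrightarrow> \<mu> \<in> S \<and> (\<forall>\<nu>\<in>S. lip_le \<mu> \<nu> \<longrightarrow> mm_iso \<mu> \<nu>)"

definition maximum_in :: "real measure set \<Rightarrow> real measure \<Rightarrow> bool" where
  "maximum_in S \<mu> \<longleftrightarrow> \<mu> \<in> S \<and> (\<forall>\<nu>\<in>S. lip_le \<nu> \<mu>)"

end

theory Submission
  imports Defs
begin

(* Every nu in M(X;1) is the push-forward of mu by a 1-Lipschitz map, so supp nu has diameter
   at most D = diam X, whereas supp xi_*mu contains both 0 = xi x0 and D = sup xi.  If
   xi_*mu is dominated by nu through a 1-Lipschitz g : supp nu -> R, then, supp nu being compact
   and of full measure, g attains 0 and D at points y0, y1 of supp nu.  These points are at
   distance exactly D, which squeezes g into y |-> |y - y0| on supp nu: g is the restriction of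
   an isometry of the line, so nu is an isometric image of xi_*mu. *)

lemma closed_mm_supp: "closed (mm_supp M)"
  unfolding closed_def
proof (subst open_subopen, intro ballI)
  fix x assume "x \<in> - mm_supp M"
  then obtain U where U: "open U" "x \<in> U" "\<not> 0 < emeasure M U"
    unfolding mm_supp_def by auto
  then have "U \<subseteq> - mm_supp M" unfolding mm_supp_def by auto
  with U show "\<exists>T. open T \<and> x \<in> T \<and> T \<subseteq> - mm_supp M" by blast
qed

lemma AE_in_mm_supp:
  fixes M :: "'a::{metric_space, second_countable_topology} measure"
  assumes sets: "sets M = sets borel"
  shows "AE x in M. x \<in> mm_supp M"
proof -
  obtain B :: "'a set set" where B: "countable B" "\<And>b. b \<in> B \<Longrightarrow> open b"
    "\<And>U. open U \<Longrightarrow> \<exists>B'. B' \<subseteq> B \<and> U = \<Union>B'"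
    by (metis univ_second_countable)
  define Z where "Z = {b \<in> B. emeasure M b = 0}"
  have "(\<Union>b\<in>Z. b) \<in> null_sets M"
  proof (rule null_sets_UN')
    show "countable Z" using B(1) unfolding Z_def by (rule countable_subset[rotated]) auto
    show "b \<in> null_sets M" if "b \<in> Z" for b
      using that B(2) sets unfolding Z_def by (auto intro: null_setsI)
  qed
  moreover have "- mm_supp M \<subseteq> (\<Union>b\<in>Z. b)"
  proof
    fix x assume "x \<in> - mm_supp M"
    then obtain U where U: "open U" "x \<in> U" "emeasure M U = 0"
      unfolding mm_supp_def by (auto simp: zero_less_iff_neq_zero)
    obtain B' where "B' \<subseteq> B" "U = \<Union>B'" using B(3)[OF U(1)] by blast
    with U(2) obtain b where b: "b \<in> B" "x \<in> b" "b \<subseteq> U" by blast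
    have "emeasure M b \<le> emeasure M U"
      using b U(1) sets by (intro emeasure_mono) auto
    with U(3) b show "x \<in> (\<Union>b\<in>Z. b)" unfolding Z_def by auto
  qed
  ultimately show ?thesis using AE_I'[of "\<Union>b\<in>Z. b" M "\<lambda>x. x \<in> mm_supp M"] by blast
qed

lemma mm_supp_distr_subset_closure:
  fixes f :: "'a \<Rightarrow> 'b::metric_space"
  assumes f: "f \<in> borel_measurable M" and A: "AE x in M. x \<in> A"
  shows "mm_supp (distr M borel f) \<subseteq> closure (f ` A)"
proof
  fix t assume t: "t \<in> mm_supp (distr M borel f)"
  show "t \<in> closure (f ` A)"
  proof (rule ccontr)
    assume "t \<notin> closure (f ` A)"
    then obtain e where e: "0 < e" "\<And>x. x \<in> A \<Longrightarrow> f x \<notin> ball t e"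
      unfolding closure_approachable by (auto simp: dist_commute)
    have "AE x in M. x \<notin> f -` ball t e" using A by eventually_elim (use e in auto)
    then have "emeasure M (f -` ball t e \<inter> space M) = 0"
      using f by (subst (asm) AE_iff_measurable[of "f -` ball t e \<inter> space M"]) auto
    moreover have "0 < emeasure (distr M borel f) (ball t e)"
      using t e unfolding mm_supp_def by auto
    ultimately show False using f by (simp add: emeasure_distr)
  qed
qed

lemma closure_image_mm_supp_subset_mm_supp_distr:
  fixes f :: "'a::metric_space \<Rightarrow> 'b::metric_space"
  assumes sets: "sets M = sets borel" and f: "continuous_on UNIV f"
  shows "closure (f ` mm_supp M) \<subseteq> mm_supp (distr M borel f)"
proof (rule closure_minimal[OF _ closed_mm_supp], rule image_subsetI)
  fix x assume x: "x \<in> mm_supp M"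
  have mf: "f \<in> borel_measurable M"
    using borel_measurable_continuous_onI[OF f] measurable_cong_sets[OF sets refl] by blast
  have space: "space M = UNIV" using sets_eq_imp_space_eq[OF sets] by simp
  show "f x \<in> mm_supp (distr M borel f)" unfolding mm_supp_def
  proof (intro CollectI allI impI)
    fix U :: "'b set" assume U: "open U" "f x \<in> U"
    then have "0 < emeasure M (f -` U)" using x open_vimage[OF U(1) f] unfolding mm_supp_def by blast
    then show "0 < emeasure (distr M borel f) U" using U mf space by (simp add: emeasure_distr)
  qed
qed

lemma mm_supp_distr_homeomorphism:
  assumes sets: "sets L = sets borel" and h: "homeomorphism UNIV UNIV h h'"
  shows "mm_supp (distr L borel h) = h ` mm_supp L"
proof
  have ch: "continuous_on UNIV h" and ch': "continuous_on UNIV h'"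
    and inv: "\<And>x. h' (h x) = x" "\<And>y. h (h' y) = y"
    using h unfolding homeomorphism_def by auto
  show "h ` mm_supp L \<subseteq> mm_supp (distr L borel h)"
    using closure_image_mm_supp_subset_mm_supp_distr[OF sets ch] closure_subset by blast
  have mh: "h \<in> borel_measurable L"
    using borel_measurable_continuous_onI[OF ch] measurable_cong_sets[OF sets refl] by blast
  have space: "space L = UNIV" using sets_eq_imp_space_eq[OF sets] by simp
  show "mm_supp (distr L borel h) \<subseteq> h ` mm_supp L"
  proof
    fix y assume y: "y \<in> mm_supp (distr L borel h)"
    have "h' y \<in> mm_supp L" unfolding mm_supp_def
    proof (intro CollectI allI impI)
      fix V assume V: "open V" "h' y \<in> V"
      have "open (h' -` V)" by (rule open_vimage[OF V(1) ch'])
      with y V have "0 < emeasure (distr L borel h) (h' -` V)" unfolding mm_supp_def by auto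
      moreover have "h -` (h' -` V) = V" using inv by auto
      ultimately show "0 < emeasure L V" using mh space \<open>open (h' -` V)\<close> by (simp add: emeasure_distr)
    qed
    then show "y \<in> h ` mm_supp L" using inv(2)[of y] by (metis image_eqI)
  qed
qed

lemma mm_iso_distr_isometry:
  fixes h :: "'a::metric_space \<Rightarrow> 'b::metric_space"
  assumes sets: "sets L = sets borel"
    and inv: "\<And>x. h' (h x) = x" "\<And>y. h (h' y) = y"
    and iso: "\<And>x y. dist (h x) (h y) = dist x y"
  shows "mm_iso L (distr L borel h)"
proof -
  have "dist (h' x) (h' y) = dist x y" for x y using iso[of "h' x" "h' y"] inv(2) by simp
  then have "continuous_on UNIV h" "continuous_on UNIV h'"
    using iso by (auto intro!: lipschitz_on_continuous_on[of 1] lipschitz_onI)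
  moreover have "range h = UNIV" "range h' = UNIV" using inv by (metis surj_def)+
  ultimately have "homeomorphism UNIV UNIV h h'" using inv unfolding homeomorphism_def by blast
  then have "mm_supp (distr L borel h) = h ` mm_supp L"
    by (rule mm_supp_distr_homeomorphism[OF sets])
  moreover have "h \<in> borel_measurable L"
    using borel_measurable_continuous_onI[OF \<open>continuous_on UNIV h\<close>]
      measurable_cong_sets[OF sets refl] by blast
  ultimately show ?thesis using iso unfolding mm_iso_def by blast
qed

lemma mm_iso_distr_isometry_inverse:
  fixes h :: "'a::metric_space \<Rightarrow> 'b::metric_space"
  assumes sets: "sets L = sets borel"
    and inv: "\<And>x. h' (h x) = x" "\<And>y. h (h' y) = y"
    and iso: "\<And>x y. dist (h x) (h y) = dist x y"
  shows "mm_iso (distr L borel h) L"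
proof -
  have iso': "dist (h' x) (h' y) = dist x y" for x y using iso[of "h' x" "h' y"] inv(2) by simp
  have "continuous_on UNIV h" "continuous_on UNIV h'"
    using iso iso' by (auto intro!: lipschitz_on_continuous_on[of 1] lipschitz_onI)
  then have "h \<in> borel_measurable L" "h' \<in> borel_measurable borel"
    using measurable_cong_sets[OF sets refl] by (auto intro: borel_measurable_continuous_onI)
  then have "distr (distr L borel h) borel h' = distr L borel (h' \<circ> h)" by (intro distr_distr) auto
  also have "\<dots> = L" using inv(1) sets by (simp add: comp_def distr_id2)
  finally have h_undone: "distr (distr L borel h) borel h' = L" .
  have "mm_iso (distr L borel h) (distr (distr L borel h) borel h')"
    by (rule mm_iso_distr_isometry[where h' = h]) (simp_all add: inv iso')
  then show ?thesis unfolding h_undone .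
qed

lemma mm_iso_distr_real_isometry:
  fixes L :: "real measure"
  assumes sets: "sets L = sets borel" and s: "\<bar>s\<bar> = 1"
  shows "mm_iso L (distr L borel (\<lambda>t. a + s * t)) \<and> mm_iso (distr L borel (\<lambda>t. a + s * t)) L"
proof -
  have "s * s = 1" using s by (metis abs_mult_self_eq mult_1_left)
  then have inv: "s * ((a + s * t) - a) = t" "a + s * (s * (u - a)) = u" for t u
    by (simp_all add: algebra_simps)
  have iso: "dist (a + s * t) (a + s * u) = dist t u" for t u
    using s by (simp add: dist_real_def abs_mult flip: right_diff_distrib)
  show ?thesis
    using mm_iso_distr_isometry[OF sets inv iso] mm_iso_distr_isometry_inverse[OF sets inv iso] ..
qed

lemma distr_distr_AE_left_inverse:
  assumes sets: "sets M = sets borel" and g: "g \<in> borel_measurable M" and h: "h \<in> borel_measurable borel"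
    and inv: "AE x in M. h (g x) = x"
  shows "distr (distr M borel g) borel h = M"
proof -
  have "distr (distr M borel g) borel h = distr M borel (h \<circ> g)" by (rule distr_distr[OF h g])
  also have "\<dots> = distr M borel (\<lambda>x. x)"
    using inv h g sets by (intro distr_cong_AE) (auto simp: measurable_cong_sets[OF sets refl])
  also have "\<dots> = M" by (rule distr_id2) (simp add: sets)
  finally show ?thesis .
qed

lemma lipschitz_spanning_diameter_affine:
  fixes g :: "real \<Rightarrow> real"
  assumes g: "1-lipschitz_on S g" and diam: "\<And>u v. u \<in> S \<Longrightarrow> v \<in> S \<Longrightarrow> dist u v \<le> D"
    and y: "y0 \<in> S" "y1 \<in> S" "g y0 = 0" "g y1 = D"
  obtains s where "\<bar>s\<bar> = 1" "\<And>y. y \<in> S \<Longrightarrow> y = y0 + s * g y"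
proof -
  have lip: "\<bar>g u - g v\<bar> \<le> \<bar>u - v\<bar>" if "u \<in> S" "v \<in> S" for u v
    using lipschitz_onD[OF g that] by (simp add: dist_real_def)
  have le_D: "\<bar>u - v\<bar> \<le> D" if "u \<in> S" "v \<in> S" for u v
    using diam[OF that] by (simp add: dist_real_def)
  have span: "\<bar>y1 - y0\<bar> = D" using lip[OF y(2,1)] le_D[OF y(2,1)] y(3,4) by simp
  show ?thesis
  proof (rule that)
    show "\<bar>if y0 \<le> y1 then 1 else - 1 :: real\<bar> = 1" by simp
    show "y = y0 + (if y0 \<le> y1 then 1 else - 1) * g y" if "y \<in> S" for y
      using lip[OF that y(1)] lip[OF that y(2)] le_D[OF that y(1)] le_D[OF that y(2)] span y(3,4)
      by (auto simp: abs_le_iff)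
  qed
qed

lemma
  fixes M :: "'a::metric_space measure" and x0 :: 'a
  assumes sets: "sets M = sets borel" and supp: "mm_supp M = UNIV" and bnd: "bounded (UNIV :: 'a set)"
    and sup: "(SUP x. dist x x0) = diameter (UNIV :: 'a set)"
  shows zero_in_mm_supp_distr_dist: "0 \<in> mm_supp (distr M borel (\<lambda>x. dist x x0))"
    and diameter_in_mm_supp_distr_dist: "diameter (UNIV :: 'a set) \<in> mm_supp (distr M borel (\<lambda>x. dist x x0))"
proof -
  have "continuous_on UNIV (\<lambda>x. dist x x0)" by (intro continuous_intros)
  then have closure_sub: "closure (range (\<lambda>x. dist x x0)) \<subseteq> mm_supp (distr M borel (\<lambda>x. dist x x0))"
    using closure_image_mm_supp_subset_mm_supp_distr[OF sets] supp by metis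
  then show "0 \<in> mm_supp (distr M borel (\<lambda>x. dist x x0))"
    using closure_subset by fastforce
  have "bdd_above (range (\<lambda>x. dist x x0))"
    using diameter_bounded_bound[OF bnd] by (intro bdd_aboveI[of _ "diameter (UNIV :: 'a set)"]) blast
  then have "(SUP x. dist x x0) \<in> closure (range (\<lambda>x. dist x x0))" by (intro closure_contains_Sup) auto
  with closure_sub sup show "diameter (UNIV :: 'a set) \<in> mm_supp (distr M borel (\<lambda>x. dist x x0))" by auto
qed

lemma
  fixes M :: "'a::metric_space measure"
  assumes sets: "sets M = sets borel" and bnd: "bounded (UNIV :: 'a set)" and \<nu>: "\<nu> \<in> measurement1 M"
  shows bounded_mm_supp_measurement1: "bounded (mm_supp \<nu>)"
    and diameter_mm_supp_measurement1: "diameter (mm_supp \<nu>) \<le> diameter (UNIV :: 'a set)"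
proof -
  obtain f where f: "1-lipschitz_on UNIV f" "\<nu> = distr M borel f"
    using \<nu> unfolding measurement1_def by blast
  have "f \<in> borel_measurable M"
    using borel_measurable_continuous_onI[OF lipschitz_on_continuous_on[OF f(1)]]
      measurable_cong_sets[OF sets refl] by blast
  then have supp_sub: "mm_supp \<nu> \<subseteq> closure (range f)"
    unfolding f(2) by (rule mm_supp_distr_subset_closure) simp
  have f_dist: "dist (f x) (f y) \<le> diameter (UNIV :: 'a set)" for x y
    using lipschitz_onD[OF f(1), of x y] diameter_bounded_bound[OF bnd, of x y] by simp
  then have "range f \<subseteq> cball (f undefined) (diameter (UNIV :: 'a set))" by auto
  then have "bounded (range f)" by (rule bounded_subset[OF bounded_cball])
  then show "bounded (mm_supp \<nu>)" using supp_sub bounded_subset by blast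
  have "diameter (mm_supp \<nu>) \<le> diameter (closure (range f))"
    using supp_sub \<open>bounded (range f)\<close> by (intro diameter_subset) auto
  also have "\<dots> = diameter (range f)" using \<open>bounded (range f)\<close> by (rule diameter_closure)
  also have "\<dots> \<le> diameter (UNIV :: 'a set)"
    using f_dist by (intro diameter_le) (auto simp: dist_real_def)
  finally show "diameter (mm_supp \<nu>) \<le> diameter (UNIV :: 'a set)" .
qed

lemma lip_le_distr_dist_extremal_affine:
  fixes M :: "'a::polish_space measure" and x0 :: 'a
  assumes mm: "mm_space M" and supp: "mm_supp M = UNIV" and bnd: "bounded (UNIV :: 'a set)"
    and sup: "(SUP x. dist x x0) = diameter (UNIV :: 'a set)"
    and \<nu>: "\<nu> \<in> measurement1 M" and le: "lip_le (distr M borel (\<lambda>x. dist x x0)) \<nu>"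
  obtains a s where "\<bar>s\<bar> = 1" "distr (distr M borel (\<lambda>x. dist x x0)) borel (\<lambda>t. a + s * t) = \<nu>"
proof -
  define \<rho> where "\<rho> = distr M borel (\<lambda>x. dist x x0)"
  define D where "D = diameter (UNIV :: 'a set)"
  define S where "S = mm_supp \<nu>"
  have setsM: "sets M = sets borel" using mm unfolding mm_space_def by blast
  have sets\<nu>: "sets \<nu> = sets borel" using \<nu> unfolding measurement1_def by auto
  obtain g where g: "1-lipschitz_on S g" "g \<in> borel_measurable \<nu>" "distr \<nu> borel g = \<rho>"
    using le unfolding lip_le_def S_def \<rho>_def by blast
  have AE_S: "AE y in \<nu>. y \<in> S" unfolding S_def by (rule AE_in_mm_supp[OF sets\<nu>])
  have "compact S"
    using bounded_mm_supp_measurement1[OF setsM bnd \<nu>] closed_mm_supp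
    unfolding S_def compact_eq_bounded_closed by blast
  then have "closed (g ` S)"
    by (intro compact_imp_closed compact_continuous_image lipschitz_on_continuous_on[OF g(1)])
  then have "mm_supp \<rho> \<subseteq> g ` S"
    using mm_supp_distr_subset_closure[OF g(2) AE_S] g(3) closure_closed by metis
  then obtain y0 y1 where y: "y0 \<in> S" "y1 \<in> S" "g y0 = 0" "g y1 = D"
    using zero_in_mm_supp_distr_dist[OF setsM supp bnd sup]
      diameter_in_mm_supp_distr_dist[OF setsM supp bnd sup]
    unfolding \<rho>_def D_def by (metis imageE subsetD)
  have "dist u v \<le> D" if "u \<in> S" "v \<in> S" for u v
    using diameter_bounded_bound[OF bounded_mm_supp_measurement1[OF setsM bnd \<nu>] that[unfolded S_def]]
      diameter_mm_supp_measurement1[OF setsM bnd \<nu>]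
    unfolding S_def D_def by linarith
  then obtain s where s: "\<bar>s\<bar> = 1" "\<And>y. y \<in> S \<Longrightarrow> y = y0 + s * g y"
    using lipschitz_spanning_diameter_affine[OF g(1) _ y] by blast
  have "AE y in \<nu>. y0 + s * g y = y" using AE_S by eventually_elim (use s(2) in auto)
  then have "distr \<rho> borel (\<lambda>t. y0 + s * t) = \<nu>"
    unfolding g(3)[symmetric] by (intro distr_distr_AE_left_inverse[OF sets\<nu> g(2)]) auto
  with s(1) show ?thesis using that unfolding \<rho>_def by blast
qed

theorem corollary1p3:
  fixes M :: "'a::polish_space measure" and x0 :: 'a
  assumes "mm_space M"
    and "mm_supp M = UNIV"
    and "bounded (UNIV :: 'a set)"
    and "(SUP x. dist x x0) = diameter (UNIV :: 'a set)"
  shows "maximal_in (measurement1 M) (distr M borel (\<lambda>x. dist x x0))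
    \<and> (\<forall>\<mu>. maximum_in (measurement1 M) \<mu> \<longrightarrow> mm_iso \<mu> (distr M borel (\<lambda>x. dist x x0)))"
proof -
  define \<rho> where "\<rho> = distr M borel (\<lambda>x. dist x x0)"
  have "dist (dist x x0) (dist y x0) \<le> 1 * dist x y" for x y
    using abs_dist_diff_le[of x x0 y] by (simp add: dist_real_def dist_commute)
  then have "1-lipschitz_on UNIV (\<lambda>x. dist x x0)" by (intro lipschitz_onI) auto
  then have \<rho>: "\<rho> \<in> measurement1 M" unfolding measurement1_def \<rho>_def by blast
  have "mm_iso \<rho> \<nu> \<and> mm_iso \<nu> \<rho>" if \<nu>: "\<nu> \<in> measurement1 M" and le: "lip_le \<rho> \<nu>" for \<nu>
  proof -
    obtain a s where "\<bar>s\<bar> = 1" "distr \<rho> borel (\<lambda>t. a + s * t) = \<nu>"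
      using lip_le_distr_dist_extremal_affine[OF assms \<nu> le[unfolded \<rho>_def]] unfolding \<rho>_def .
    then show ?thesis using mm_iso_distr_real_isometry[of \<rho> s a] unfolding \<rho>_def by auto
  qed
  with \<rho> show ?thesis unfolding maximal_in_def maximum_in_def \<rho>_def by blast
qed

end
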